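(* Let $G$ be a $4$-graph, let $A,B\subseteq V(G)$ be disjoint, and suppose $G$ is $\varepsilon$-close to $G^{\mathrm{odd}}(A,B)$ via some $\mathcal T\subseteq\binom{A\cup B}3$, where $\varepsilon\le0.1$. If $x_1x_2\cdots x_{\ell+3}$ is a tight walk in $G^{\mathrm{odd}}(A,B)$ with $\ell\ge6$ such that $\{x_1,x_2,x_3\}\in\mathcal T$ and $\{x_{\ell+1},x_{\ell+2},x_{\ell+3}\}\in\mathcal T$, then there are vertices $y_4,\dots,y_\ell\in V(G)$ such that $x_1x_2x_3y_4\cdots y_\ell x_{\ell+1}x_{\ell+2}x_{\ell+3}$ is a tight walk in $G$.
   Context: A $4$-graph is a $4$-uniform hypergraph. $G^{\mathrm{odd}}(A,B)$ is the $4$-graph on $A\cup B$ whose edges are the $4$-subsets meeting $A$ in an odd number of vertices. A tight walk in a $4$-graph $H$ is a sequence of (not necessarily distinct) vertices $v_1v_2\cdots v_m$, $m\ge4$, such that every four consecutive vertices $v_{i+1},v_{i+2},v_{i+3},v_{i+4}$ form an edge of $H$ (so they are distinct). For a triple $\{x,y,z\}\subseteq A\cup B$, its neighborhood in $G^{\mathrm{odd}}(A,B)$ is $B$ if an odd number of $x,y,z$ lie in $A$ and $A$ otherwise. $\partial\mathcal T$ is the set of pairs contained in some triple of $\mathcal T$. $G$ is $\varepsilon$-close to $G^{\mathrm{odd}}(A,B)$ via $\mathcal T\subseteq\binom{A\cup B}3$ if: (1) for each $\{x,y,z\}\in\mathcal T$ with neighborhood $U\in\{A,B\}$ in $G^{\mathrm{odd}}(A,B)$,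 the number of $u\in U$ with $\{x,y,z,u\}\in E(G)$ is at least $(1-\varepsilon)|U|$; (2) for each $\{x,y\}\in\partial\mathcal T$, the number of $z\in A$ with $\{x,y,z\}\in\mathcal T$ is at least $(1-\varepsilon)|A|$, and the number of $z\in B$ with $\{x,y,z\}\in\mathcal T$ is at least $(1-\varepsilon)|B|$; (3) for each $x\in A\cup B$, the number of $y\in A$ with $\{x,y\}\in\partial\mathcal T$ is at least $(1-\varepsilon)|A|$, and the number of $y\in B$ with $\{x,y\}\in\partial\mathcal T$ is at least $(1-\varepsilon)|B|$. *)

theory Defs
  imports Complex_Main
begin

definition four_graph :: "'a set \<Rightarrow> 'a set set \<Rightarrow> bool" where
  "four_graph V E \<longleftrightarrow> (\<forall>e\<in>E. e \<subseteq> V \<and> card e = 4)"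

definition Godd :: "'a set \<Rightarrow> 'a set \<Rightarrow> 'a set set" where
  "Godd A B = {e. e \<subseteq> A \<union> B \<and> card e = 4 \<and> odd (card (e \<inter> A))}"

definition tight_walk :: "'a set set \<Rightarrow> 'a list \<Rightarrow> bool" where
  "tight_walk E w \<longleftrightarrow> 4 \<le> length w \<and>
     (\<forall>i. i + 4 \<le> length w \<longrightarrow>
        distinct [w!i, w!(i+1), w!(i+2), w!(i+3)] \<and>
        {w!i, w!(i+1), w!(i+2), w!(i+3)} \<in> E)"

definition odd_nbhd :: "'a set \<Rightarrow> 'a set \<Rightarrow> 'a set \<Rightarrow> 'a set" where
  "odd_nbhd A B t = (if odd (card (t \<inter> A)) then B else A)"

definition shadow :: "'a set set \<Rightarrow> 'a set set" where
  "shadow T = {p. card p = 2 \<and> (\<exists>t\<in>T. p \<subseteq> t)}"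

definition eps_close :: "'a set set \<Rightarrow> 'a set \<Rightarrow> 'a set \<Rightarrow> real \<Rightarrow> 'a set set \<Rightarrow> bool" where
  "eps_close E A B eps T \<longleftrightarrow>
     (\<forall>t\<in>T. t \<subseteq> A \<union> B \<and> card t = 3) \<and>
     (\<forall>t\<in>T. real (card {u \<in> odd_nbhd A B t. insert u t \<in> E})
              \<ge> (1 - eps) * real (card (odd_nbhd A B t))) \<and>
     (\<forall>p\<in>shadow T.
        real (card {z\<in>A. p \<union> {z} \<in> T}) \<ge> (1 - eps) * real (card A) \<and>
        real (card {z\<in>B. p \<union> {z} \<in> T}) \<ge> (1 - eps) * real (card B)) \<and>
     (\<forall>x\<in>A \<union> B.
        real (card {y\<in>A. {x, y} \<in> shadow T}) \<ge> (1 - eps) * real (card A) \<and>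
        real (card {y\<in>B. {x, y} \<in> shadow T}) \<ge> (1 - eps) * real (card B))"

end

theory Submission
  imports Defs
begin

(* Proof idea: the middle vertices are chosen one at a time, each in the part (A or B) of the
   corresponding vertex of the given walk.  A triple of T copying the parts of three consecutive
   walk vertices has the part of the next walk vertex as its neighbourhood in G^odd, so by
   eps-closeness almost every vertex there extends it to an edge of G, and almost every vertex
   extends a pair of the shadow to a triple of T.  Each vertex has to satisfy at most four such
   conditions, and 4 eps < 1, so a valid choice always exists.  Greedy extension from the first
   triple, keeping the last three chosen vertices in T, fills all but three positions; the last
   three vertices d, e, f are chosen in the order d, f, e so as to link up with the final triple. *)

definition side :: "'a set \<Rightarrow> 'a set \<Rightarrow> 'a \<Rightarrow> 'a set" where
  "side A B v = (if v \<in> A then A else B)"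

lemma side_subset: "side A B v \<subseteq> A \<union> B"
  by (simp add: side_def)

lemma self_in_side: "v \<in> A \<union> B \<Longrightarrow> v \<in> side A B v"
  by (auto simp: side_def)

lemma in_side_iff: "A \<inter> B = {} \<Longrightarrow> u \<in> side A B v \<Longrightarrow> u \<in> A \<longleftrightarrow> v \<in> A"
  by (auto simp: side_def split: if_splits)

lemma card_Int_set_distinct:
  assumes "distinct xs"
  shows "card (set xs \<inter> A) = length (filter (\<lambda>x. x \<in> A) xs)"
proof -
  have "set xs \<inter> A = set (filter (\<lambda>x. x \<in> A) xs)" by auto
  with distinct_card[OF distinct_filter[OF assms]] show ?thesis by simp
qed

lemma odd_nbhd_eq_side:
  assumes "A \<inter> B = {}" "{p, q, r, s} \<in> Godd A B" "card {a, b, c} = 3"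
    and "a \<in> side A B p" "b \<in> side A B q" "c \<in> side A B r"
  shows "odd_nbhd A B {a, b, c} = side A B s"
proof -
  have "distinct [p, q, r, s]"
    using assms(2) by (intro card_distinct) (simp add: Godd_def)
  then have odd: "odd (length (filter (\<lambda>x. x \<in> A) [p, q, r, s]))"
    using assms(2) card_Int_set_distinct[of "[p, q, r, s]" A] by (simp add: Godd_def)
  have "distinct [a, b, c]"
    using assms(3) by (intro card_distinct) simp
  then have "card ({a, b, c} \<inter> A) = length (filter (\<lambda>x. x \<in> A) [p, q, r])"
    using card_Int_set_distinct[of "[a, b, c]" A] in_side_iff[OF assms(1)] assms(4-6) by simp
  with odd show ?thesis
    by (cases "p \<in> A"; cases "q \<in> A"; cases "r \<in> A"; cases "s \<in> A")
      (simp_all add: odd_nbhd_def side_def)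
qed

definition tight_seq :: "'a set set \<Rightarrow> (nat \<Rightarrow> 'a) \<Rightarrow> nat \<Rightarrow> bool" where
  "tight_seq E z n \<longleftrightarrow> (\<forall>i. i + 4 \<le> n \<longrightarrow> {z i, z (i+1), z (i+2), z (i+3)} \<in> E)"

lemma tight_seq_mono: "tight_seq E z n \<Longrightarrow> m \<le> n \<Longrightarrow> tight_seq E z m"
  by (simp add: tight_seq_def)

lemma tight_seq_shift:
  assumes "tight_seq E z (k + n)"
  shows "tight_seq E (\<lambda>i. z (k + i)) n"
  unfolding tight_seq_def
proof (intro allI impI)
  fix i assume "i + 4 \<le> n"
  then have "{z (k+i), z (k+i+1), z (k+i+2), z (k+i+3)} \<in> E"
    using assms unfolding tight_seq_def by simp
  then show "{z (k+i), z (k+(i+1)), z (k+(i+2)), z (k+(i+3))} \<in> E"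
    by (simp add: add.assoc)
qed

lemma tight_seq_Godd_in_parts:
  assumes "tight_seq (Godd A B) x n" "4 \<le> n" "i < n"
  shows "x i \<in> A \<union> B"
proof -
  define j where "j = min i (n - 4)"
  have "{x j, x (j+1), x (j+2), x (j+3)} \<subseteq> A \<union> B"
    using assms(1,2) by (simp add: tight_seq_def Godd_def j_def)
  moreover have "i \<in> {j, j+1, j+2, j+3}" using assms(2,3) by (auto simp: j_def)
  ultimately show ?thesis by auto
qed

lemma tight_seq_nth_if_tight_walk:
  "tight_walk E xs \<Longrightarrow> tight_seq E ((!) xs) (length xs)"
  by (simp add: tight_walk_def tight_seq_def)

lemma tight_walk_map_upt:
  assumes "\<And>e. e \<in> E \<Longrightarrow> card e = 4" "4 \<le> n" "tight_seq E z n"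
  shows "tight_walk E (map z [0..<n])"
proof -
  have "distinct [z i, z (i+1), z (i+2), z (i+3)] \<and> {z i, z (i+1), z (i+2), z (i+3)} \<in> E"
    if "i + 4 \<le> n" for i
  proof -
    have edge: "{z i, z (i+1), z (i+2), z (i+3)} \<in> E"
      using assms(3) that by (simp add: tight_seq_def)
    then have "card (set [z i, z (i+1), z (i+2), z (i+3)]) = 4" using assms(1) by simp
    then have "distinct [z i, z (i+1), z (i+2), z (i+3)]" by (intro card_distinct) simp
    with edge show ?thesis by simp
  qed
  with assms(2) show ?thesis by (simp add: tight_walk_def)
qed

lemma take_eq_map_nth: "n \<le> length xs \<Longrightarrow> take n xs = map ((!) xs) [0..<n]"
  by (rule nth_equalityI) simp_all

lemma drop_eq_map_nth: "drop n xs = map ((!) xs) [n..<length xs]"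
  by (rule nth_equalityI) simp_all

lemma map_upt_splice:
  assumes "a \<le> b" "b \<le> c" "\<forall>i<a. z i = x i" "\<forall>i\<ge>b. z i = x i"
  shows "map x [0..<a] @ map z [a..<b] @ map x [b..<c] = map z [0..<c]"
proof -
  have "[0..<b] = [0..<a] @ [a..<b]" "[0..<c] = [0..<b] @ [b..<c]"
    using upt_add_eq_append[of 0 a "b - a"] upt_add_eq_append[of 0 b "c - b"] assms(1,2)
    by simp_all
  moreover have "map x [0..<a] = map z [0..<a]" "map x [b..<c] = map z [b..<c]"
    using assms(3,4) by simp_all
  ultimately show ?thesis by simp
qed

definition almost_all :: "real \<Rightarrow> 'a set \<Rightarrow> ('a \<Rightarrow> bool) \<Rightarrow> bool" where
  "almost_all eps U P \<longleftrightarrow> (1 - eps) * real (card U) \<le> real (card {u\<in>U. P u})"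

lemma card_exceptions_le:
  assumes "finite U" "almost_all eps U P"
  shows "real (card {u\<in>U. \<not> P u}) \<le> eps * real (card U)"
proof -
  have "card U = card ({u\<in>U. P u} \<union> {u\<in>U. \<not> P u})"
    by (rule arg_cong[where f = card]) blast
  also have "\<dots> = card {u\<in>U. P u} + card {u\<in>U. \<not> P u}"
    by (rule card_Un_disjoint) (use assms(1) in auto)
  finally have "real (card U) = real (card {u\<in>U. P u}) + real (card {u\<in>U. \<not> P u})"
    by simp
  with assms(2) show ?thesis unfolding almost_all_def by (simp add: algebra_simps)
qed

lemma almost_all_common_element:
  assumes "finite U" "U \<noteq> {}" "real (length Ps) * eps < 1"
    and "\<forall>P\<in>set Ps. almost_all eps U P"
  shows "\<exists>u\<in>U. \<forall>P\<in>set Ps. P u"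
proof (rule ccontr)
  let ?bad = "\<lambda>P. {u\<in>U. \<not> P u}"
  assume "\<not> ?thesis"
  then have cover: "U \<subseteq> (\<Union>P\<in>set Ps. ?bad P)" by blast
  then have "card U \<le> card (\<Union>P\<in>set Ps. ?bad P)"
    using assms(1) by (simp add: card_mono)
  also have "\<dots> \<le> (\<Sum>P\<in>set Ps. card (?bad P))"
    by (rule card_UN_le) simp
  finally have "real (card U) \<le> (\<Sum>P\<in>set Ps. real (card (?bad P)))"
    by (simp flip: of_nat_sum)
  also have "\<dots> \<le> real (card (set Ps)) * (eps * real (card U))"
    using sum_bounded_above[of "set Ps" _ "eps * real (card U)"] card_exceptions_le[OF assms(1)] assms(4)
    by simp
  also have "\<dots> \<le> real (length Ps) * (eps * real (card U))"
  proof (rule mult_right_mono)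
    show "real (card (set Ps)) \<le> real (length Ps)" by (simp add: card_length)
    obtain P where "P \<in> set Ps" using cover assms(2) by blast
    then show "0 \<le> eps * real (card U)"
      using card_exceptions_le[OF assms(1)] assms(4) by (meson of_nat_0_le_iff order_trans)
  qed
  also have "\<dots> < real (card U)"
    using assms(1-3) by (simp add: card_gt_0_iff)
  finally show False by simp
qed

locale close_to_odd =
  fixes E :: "'a set set" and A B :: "'a set" and eps :: real and T :: "'a set set"
  assumes finite_A: "finite A" and finite_B: "finite B" and disjoint: "A \<inter> B = {}"
    and close: "eps_close E A B eps T"
    and eps_less: "4 * eps < 1"
begin

lemma triple_subset_parts: "t \<in> T \<Longrightarrow> t \<subseteq> A \<union> B"
  using close by (simp add: eps_close_def)

lemma card_triple: "t \<in> T \<Longrightarrow> card t = 3"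
  using close by (simp add: eps_close_def)

lemma pairs_in_shadow:
  assumes "{a, b, c} \<in> T"
  shows "{a, b} \<in> shadow T" "{b, c} \<in> shadow T"
proof -
  have "distinct [a, b, c]"
    using card_triple[OF assms] by (intro card_distinct) simp
  then show "{a, b} \<in> shadow T" "{b, c} \<in> shadow T"
    using assms unfolding shadow_def by (simp_all add: bexI[of _ "{a, b, c}"])
qed

lemma common_vertex_in_side:
  assumes "v \<in> A \<union> B" "length Ps \<le> 4" "\<forall>P\<in>set Ps. almost_all eps (side A B v) P"
  shows "\<exists>u\<in>side A B v. \<forall>P\<in>set Ps. P u"
proof (rule almost_all_common_element[OF _ _ _ assms(3)])
  show "finite (side A B v)" using finite_A finite_B by (simp add: side_def)
  show "side A B v \<noteq> {}" using self_in_side[OF assms(1)] by blast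
  show "real (length Ps) * eps < 1"
  proof (cases "eps \<ge> 0")
    case True
    then have "real (length Ps) * eps \<le> 4 * eps" using assms(2) by (intro mult_right_mono) simp_all
    then show ?thesis using eps_less by simp
  next
    case False
    then have "real (length Ps) * eps \<le> 0" by (simp add: mult_nonneg_nonpos)
    then show ?thesis by simp
  qed
qed

lemma almost_all_edge_extension:
  assumes "{a, b, c} \<in> T" "{p, q, r, s} \<in> Godd A B"
    and "a \<in> side A B p" "b \<in> side A B q" "c \<in> side A B r"
  shows "almost_all eps (side A B s) (\<lambda>u. {a, b, c, u} \<in> E)"
proof -
  have "almost_all eps (odd_nbhd A B {a, b, c}) (\<lambda>u. insert u {a, b, c} \<in> E)"
    using close assms(1) unfolding eps_close_def almost_all_def by blast
  moreover have "odd_nbhd A B {a, b, c} = side A B s"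
    using odd_nbhd_eq_side[OF disjoint assms(2) card_triple[OF assms(1)] assms(3-5)] .
  moreover have "insert u {a, b, c} = {a, b, c, u}" for u by auto
  ultimately show ?thesis by simp
qed

lemma almost_all_triple_extension:
  assumes "{a, b} \<in> shadow T"
  shows "almost_all eps (side A B v) (\<lambda>u. {a, b, u} \<in> T)"
proof -
  have "almost_all eps A (\<lambda>u. {a, b} \<union> {u} \<in> T) \<and> almost_all eps B (\<lambda>u. {a, b} \<union> {u} \<in> T)"
    using close assms unfolding eps_close_def almost_all_def by blast
  moreover have "{a, b} \<union> {u} = {a, b, u}" for u by auto
  ultimately show ?thesis by (simp only: side_def split: if_split) simp
qed

lemma almost_all_shadow:
  assumes "x \<in> A \<union> B"
  shows "almost_all eps (side A B v) (\<lambda>y. {x, y} \<in> shadow T)"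
proof -
  have "almost_all eps A (\<lambda>y. {x, y} \<in> shadow T) \<and> almost_all eps B (\<lambda>y. {x, y} \<in> shadow T)"
    using close assms unfolding eps_close_def almost_all_def by blast
  then show ?thesis by (simp add: side_def)
qed

lemma extend_by_one_vertex:
  assumes "{a, b, c} \<in> T" "{p, q, r, s} \<in> Godd A B"
    and "a \<in> side A B p" "b \<in> side A B q" "c \<in> side A B r"
  obtains d where "d \<in> side A B s" "{a, b, c, d} \<in> E" "{b, c, d} \<in> T"
proof -
  have "s \<in> A \<union> B" using assms(2) by (simp add: Godd_def)
  moreover note almost_all_edge_extension[OF assms]
  moreover note almost_all_triple_extension[OF pairs_in_shadow(2)[OF assms(1)]]
  ultimately show thesis
    using common_vertex_in_side[of s "[\<lambda>u. {a, b, c, u} \<in> E, \<lambda>u. {b, c, u} \<in> T]"] that by auto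
qed

lemma greedy_walk:
  assumes "tight_seq (Godd A B) x (n + 3)" "{x 0, x 1, x 2} \<in> T"
  shows "\<exists>z. (\<forall>i<3. z i = x i) \<and> (\<forall>i<n+3. z i \<in> side A B (x i)) \<and>
    tight_seq E z (n + 3) \<and> {z n, z (n+1), z (n+2)} \<in> T"
  using assms(1)
proof (induction n)
  case 0
  have "x i \<in> side A B (x i)" if "i < 3" for i
  proof (rule self_in_side)
    show "x i \<in> A \<union> B"
      using triple_subset_parts[OF assms(2)] that by (auto simp: less_Suc_eq eval_nat_numeral)
  qed
  then show ?case using assms(2) by (intro exI[of _ x]) (simp add: tight_seq_def eval_nat_numeral)
next
  case (Suc n)
  have "tight_seq (Godd A B) x (n + 3)"
    using Suc.prems by (rule tight_seq_mono) simp
  then obtain z where z: "\<forall>i<3. z i = x i" "\<forall>i<n+3. z i \<in> side A B (x i)"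
    "tight_seq E z (n + 3)" "{z n, z (n+1), z (n+2)} \<in> T"
    using Suc.IH by blast
  have "{x n, x (n+1), x (n+2), x (n+3)} \<in> Godd A B"
    using Suc.prems by (simp add: tight_seq_def)
  moreover have "z n \<in> side A B (x n)" "z (n+1) \<in> side A B (x (n+1))"
    "z (n+2) \<in> side A B (x (n+2))"
    using z(2) by simp_all
  ultimately obtain d where d: "d \<in> side A B (x (n+3))" "{z n, z (n+1), z (n+2), d} \<in> E"
    "{z (n+1), z (n+2), d} \<in> T"
    using extend_by_one_vertex[OF z(4)] by blast
  define z' where "z' = z(n+3 := d)"
  have "tight_seq E z' (Suc n + 3)"
    unfolding tight_seq_def
  proof (intro allI impI)
    fix i assume "i + 4 \<le> Suc n + 3"
    then consider "i + 4 \<le> n + 3" | "i = n" by linarith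
    then show "{z' i, z' (i+1), z' (i+2), z' (i+3)} \<in> E"
    proof cases
      case 1
      then show ?thesis using z(3) by (simp add: tight_seq_def z'_def)
    next
      case 2
      then show ?thesis using d(2) by (simp add: z'_def)
    qed
  qed
  moreover have "\<forall>i<Suc n + 3. z' i \<in> side A B (x i)"
    using z(2) d(1) by (simp add: z'_def less_Suc_eq)
  moreover have "\<forall>i<3. z' i = x i" "{z' (Suc n), z' (Suc n + 1), z' (Suc n + 2)} \<in> T"
    using z(1) d(3) by (simp_all add: z'_def)
  ultimately show ?case by blast
qed

lemma fill_gap_of_three:
  assumes "tight_seq (Godd A B) p 9" "{a, b, c} \<in> T" "{p 6, p 7, p 8} \<in> T"
    and "a \<in> side A B (p 0)" "b \<in> side A B (p 1)" "c \<in> side A B (p 2)"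
  obtains d e f where "d \<in> side A B (p 3)" "e \<in> side A B (p 4)" "f \<in> side A B (p 5)"
    and "{a, b, c, d} \<in> E" "{b, c, d, e} \<in> E" "{c, d, e, f} \<in> E"
    and "{d, e, f, p 6} \<in> E" "{e, f, p 6, p 7} \<in> E" "{f, p 6, p 7, p 8} \<in> E"
proof -
  have win: "{p i, p (i+1), p (i+2), p (i+3)} \<in> Godd A B" if "i \<le> 5" for i
    using assms(1) that by (simp add: tight_seq_def)
  have w0: "{p 0, p 1, p 2, p 3} \<in> Godd A B" and w1: "{p 1, p 2, p 3, p 4} \<in> Godd A B"
    and w2: "{p 2, p 3, p 5, p 4} \<in> Godd A B" and w3: "{p 6, p 3, p 5, p 4} \<in> Godd A B"
    and w4: "{p 6, p 7, p 5, p 4} \<in> Godd A B" and w5: "{p 6, p 7, p 8, p 5} \<in> Godd A B"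
    using win[of 0] win[of 1] win[of 2] win[of 3] win[of 4] win[of 5]
    by (simp_all add: insert_commute eval_nat_numeral)
  have in_parts: "p i \<in> A \<union> B" if "i < 9" for i
    using tight_seq_Godd_in_parts[OF assms(1) _ that] by simp
  have own: "p i \<in> side A B (p i)" if "i < 9" for i
    using self_in_side[OF in_parts[OF that]] .
  \<comment> \<open>\<open>d\<close> also pairs with \<open>p 6\<close> in the shadow, so that \<open>f\<close> can complete
    the triple \<open>{p 6, d, f}\<close>.\<close>
  obtain d where d: "d \<in> side A B (p 3)" "{a, b, c, d} \<in> E" "{b, c, d} \<in> T"
    "{p 6, d} \<in> shadow T"
    using common_vertex_in_side[of "p 3" "[\<lambda>u. {a, b, c, u} \<in> E, \<lambda>u. {b, c, u} \<in> T,
        \<lambda>u. {p 6, u} \<in> shadow T]"] in_parts[of 3] assms(4-6)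
      almost_all_edge_extension[OF assms(2) w0] almost_all_shadow[OF in_parts[of 6]]
      almost_all_triple_extension[OF pairs_in_shadow(2)[OF assms(2)]]
    by auto
  obtain f where f: "f \<in> side A B (p 5)" "{p 6, p 7, p 8, f} \<in> E" "{p 6, p 7, f} \<in> T"
    "{c, d, f} \<in> T" "{p 6, d, f} \<in> T"
    using common_vertex_in_side[of "p 5" "[\<lambda>u. {p 6, p 7, p 8, u} \<in> E, \<lambda>u. {p 6, p 7, u} \<in> T,
        \<lambda>u. {c, d, u} \<in> T, \<lambda>u. {p 6, d, u} \<in> T]"] in_parts[of 5] own[of 6] own[of 7] own[of 8]
      almost_all_edge_extension[OF assms(3) w5]
      almost_all_triple_extension[OF pairs_in_shadow(1)[OF assms(3)]]
      almost_all_triple_extension[OF pairs_in_shadow(2)[OF d(3)]]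
      almost_all_triple_extension[OF d(4)]
    by auto
  obtain e where e: "e \<in> side A B (p 4)" "{b, c, d, e} \<in> E" "{c, d, f, e} \<in> E"
    "{p 6, d, f, e} \<in> E" "{p 6, p 7, f, e} \<in> E"
    using common_vertex_in_side[of "p 4" "[\<lambda>u. {b, c, d, u} \<in> E, \<lambda>u. {c, d, f, u} \<in> E,
        \<lambda>u. {p 6, d, f, u} \<in> E, \<lambda>u. {p 6, p 7, f, u} \<in> E]"] in_parts[of 4] own[of 6] own[of 7]
      assms(5,6) d(1) f(1)
      almost_all_edge_extension[OF d(3) w1] almost_all_edge_extension[OF f(4) w2]
      almost_all_edge_extension[OF f(5) w3] almost_all_edge_extension[OF f(3) w4]
    by auto
  show thesis
  proof (rule that[OF d(1) e(1) f(1) d(2) e(2)])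
    show "{c, d, e, f} \<in> E" "{d, e, f, p 6} \<in> E" "{e, f, p 6, p 7} \<in> E" "{f, p 6, p 7, p 8} \<in> E"
      using e(3-5) f(2) by (simp_all add: insert_commute)
  qed
qed

lemma connecting_walk:
  assumes "tight_seq (Godd A B) x (n + 9)" "{x 0, x 1, x 2} \<in> T"
    and "{x (n+6), x (n+7), x (n+8)} \<in> T"
  obtains Z where "\<forall>i<3. Z i = x i" "\<forall>i\<ge>n+6. Z i = x i"
    and "\<forall>i<n+9. Z i \<in> side A B (x i)" "tight_seq E Z (n + 9)"
proof -
  obtain z where z: "\<forall>i<3. z i = x i" "\<forall>i<n+3. z i \<in> side A B (x i)"
    "tight_seq E z (n + 3)" "{z n, z (n+1), z (n+2)} \<in> T"
    using greedy_walk[OF tight_seq_mono[OF assms(1), of "n + 3"] assms(2)] by auto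
  obtain d e f where middle: "d \<in> side A B (x (n+3))" "e \<in> side A B (x (n+4))"
    "f \<in> side A B (x (n+5))"
    and edges: "{z n, z (n+1), z (n+2), d} \<in> E" "{z (n+1), z (n+2), d, e} \<in> E"
    "{z (n+2), d, e, f} \<in> E" "{d, e, f, x (n+6)} \<in> E" "{e, f, x (n+6), x (n+7)} \<in> E"
    "{f, x (n+6), x (n+7), x (n+8)} \<in> E"
    using fill_gap_of_three[OF tight_seq_shift[OF assms(1)] z(4) assms(3)] z(2) by (simp; blast)
  define Z where "Z i = (if i < n+3 then z i else if i = n+3 then d else if i = n+4 then e
    else if i = n+5 then f else x i)" for i
  show thesis
  proof (rule that)
    show "\<forall>i<3. Z i = x i" using z(1) by (simp add: Z_def)
    show "\<forall>i\<ge>n+6. Z i = x i" by (simp add: Z_def)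
    show "\<forall>i<n+9. Z i \<in> side A B (x i)"
      using z(2) middle self_in_side[OF tight_seq_Godd_in_parts[OF assms(1)]] by (simp add: Z_def)
    show "tight_seq E Z (n + 9)"
      unfolding tight_seq_def
    proof (intro allI impI)
      fix i assume "i + 4 \<le> n + 9"
      then consider "i + 4 \<le> n + 3" | "i = n" | "i = n+1" | "i = n+2" | "i = n+3" | "i = n+4"
        | "i = n+5"
        by linarith
      then show "{Z i, Z (i+1), Z (i+2), Z (i+3)} \<in> E"
        by cases (use z(3) edges in \<open>simp_all add: Z_def tight_seq_def add.commute\<close>)
    qed
  qed
qed

end

theorem lemma6p5:
  fixes V :: "'a set" and E :: "'a set set" and A B :: "'a set"
    and eps :: real and T :: "'a set set" and xs :: "'a list" and l :: nat
  assumes "finite V"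
    and "four_graph V E"
    and "A \<subseteq> V" and "B \<subseteq> V" and "A \<inter> B = {}"
    and "eps_close E A B eps T"
    and "eps \<le> 0.1"
    and "6 \<le> l"
    and "length xs = l + 3"
    and "tight_walk (Godd A B) xs"
    and "set (take 3 xs) \<in> T"
    and "set (drop l xs) \<in> T"
  shows "\<exists>ys. length ys = l - 3 \<and> set ys \<subseteq> V \<and>
           tight_walk E (take 3 xs @ ys @ drop l xs)"
proof -
  interpret close_to_odd E A B eps T
    using assms(1,3-7) finite_subset by unfold_locales auto
  obtain n where l: "l = n + 6" using \<open>6 \<le> l\<close> by (metis add.commute le_add_diff_inverse)
  have len: "length xs = n + 9" using assms(9) by (simp add: l)
  define x where "x = (!) xs"
  have take: "take 3 xs = map x [0..<3]" and drop: "drop l xs = map x [n+6..<n+9]"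
    using take_eq_map_nth[of 3 xs] drop_eq_map_nth[of l xs] len by (simp_all add: x_def l)
  have "tight_seq (Godd A B) x (n + 9)"
    using tight_seq_nth_if_tight_walk[OF assms(10)] len by (simp add: x_def)
  moreover have "{x 0, x 1, x 2} \<in> T" "{x (n+6), x (n+7), x (n+8)} \<in> T"
    using assms(11,12) unfolding take drop by (simp_all add: eval_nat_numeral upt_rec)
  ultimately obtain Z where Z: "\<forall>i<3. Z i = x i" "\<forall>i\<ge>n+6. Z i = x i"
    "\<forall>i<n+9. Z i \<in> side A B (x i)" "tight_seq E Z (n + 9)"
    by (rule connecting_walk)
  have "Z i \<in> V" if "i < n + 9" for i
    using Z(3) that side_subset[of A B "x i"] assms(3,4) by auto
  then have "set (map Z [3..<l]) \<subseteq> V" by (auto simp: l)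
  moreover have "take 3 xs @ map Z [3..<l] @ drop l xs = map Z [0..<n+9]"
    unfolding take drop unfolding l by (rule map_upt_splice) (use Z in simp_all)
  moreover have "tight_walk E (map Z [0..<n+9])"
    using assms(2) Z(4) by (intro tight_walk_map_upt) (simp_all add: four_graph_def)
  ultimately show ?thesis by (intro exI[of _ "map Z [3..<l]"]) (simp add: l)
qed


end
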